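(* Let $X=(T,E)$ and $Y=(Z,F)$ be colored graphs and let $W=(W_{i\alpha,j\beta})_{i\alpha,j\beta\in T\times Z}$ be the fundamental magic biunitary of $A(X*Y)$. Then for all $\alpha,\beta\in Z$ and all $i,j\in T$, $$\sum_{k\in T}W_{i\alpha,k\beta}=\sum_{k\in T}W_{k\alpha,j\beta};$$ in particular the element $V_{\alpha\beta}:=\sum_kW_{i\alpha,k\beta}$ is independent of $i$ (and equals $\sum_kW_{k\alpha,j\beta}$ for any $j$). The matrix $V=(V_{\alpha\beta})_{\alpha,\beta\in Z}$ is a magic biunitary.
   Context: A colored graph $X=(V,E)$ is a finite set $V$ with a partition $E=\{E_1,\dots,E_p\}$ of $(V\times V)-\Delta_V$. Free product: for $X=(T,E)$, $E=\{E_1,\dots,E_p\}$, and $Y=(Z,F)$, $F=\{F_1,\dots,F_q\}$, $X*Y$ has vertex set $T\times Z$ and partition $\{E_r^\circ\}\cup\{F_s^\circ\}$, $E_r^\circ=\{(i\alpha,j\alpha)\mid(i,j)\in E_r,\alpha\in Z\}$, $F_s^\circ=\{(i\alpha,j\beta)\mid i,j\in T,(\alpha,\beta)\in F_s\}$. A magic biunitary is a square matrix of projections whose rows and columns are partitions of unity. For a colored graph on $N$ vertices, $A(\cdot)$ is the quotient of the universal C*-algebra generated by the entries of an $N\times N$ magic biunitary $W$ by the relations $Wd=dW$, $d$ the Laplacian ($d_{ii}=0$, $d_{xy}=c(k)$ for $(x,y)$ in the $k$-th class, $c$ injective into ${\mathbb C}$); equivalently by the relations $\sum_{z:(z,y)\in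 C}W_{xz}=\sum_{z:(x,z)\in C}W_{zy}$ for every class $C$ of the partition. *)

theory Defs
  imports Complex_Main
begin

class cstar_algebra = real_normed_algebra_1 + banach +
  fixes cscale :: "complex \<Rightarrow> 'a \<Rightarrow> 'a"
    and cstar :: "'a \<Rightarrow> 'a"
  assumes cscale_of_real: "cscale (complex_of_real r) x = scaleR r x"
    and cscale_add_left: "cscale (a + b) x = cscale a x + cscale b x"
    and cscale_add_right: "cscale a (x + y) = cscale a x + cscale a y"
    and cscale_mult: "cscale (a * b) x = cscale a (cscale b x)"
    and cscale_mult_left: "cscale a (x * y) = cscale a x * y"
    and cscale_mult_right: "cscale a (x * y) = x * cscale a y"
    and norm_cscale: "norm (cscale a x) = cmod a * norm x"
    and cstar_add: "cstar (x + y) = cstar x + cstar y"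
    and cstar_cscale: "cstar (cscale a x) = cscale (cnj a) (cstar x)"
    and cstar_mult: "cstar (x * y) = cstar y * cstar x"
    and cstar_cstar: "cstar (cstar x) = x"
    and cstar_identity: "norm (cstar x * x) = (norm x)\<^sup>2"

definition is_projection :: "'a::cstar_algebra \<Rightarrow> bool" where
  "is_projection p \<longleftrightarrow> cstar p = p \<and> p * p = p"

definition magic_biunitary :: "'i set \<Rightarrow> ('i \<Rightarrow> 'i \<Rightarrow> 'a::cstar_algebra) \<Rightarrow> bool" where
  "magic_biunitary I W \<longleftrightarrow>
     (\<forall>x\<in>I. \<forall>y\<in>I. is_projection (W x y)) \<and>
     (\<forall>x\<in>I. (\<Sum>y\<in>I. W x y) = 1) \<and>
     (\<forall>y\<in>I. (\<Sum>x\<in>I. W x y) = 1)"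

definition colored_graph :: "'v set \<Rightarrow> ('v \<times> 'v) set set \<Rightarrow> bool" where
  "colored_graph V E \<longleftrightarrow> finite V \<and> (\<forall>C\<in>E. C \<noteq> {}) \<and> pairwise disjnt E \<and>
     \<Union>E = {(x, y). x \<in> V \<and> y \<in> V \<and> x \<noteq> y}"

definition free_prod_classes ::
  "'t set \<Rightarrow> ('t \<times> 't) set set \<Rightarrow> 'z set \<Rightarrow> ('z \<times> 'z) set set
    \<Rightarrow> (('t \<times> 'z) \<times> ('t \<times> 'z)) set set" where
  "free_prod_classes T E Z F =
     (\<lambda>C. {((i, a), (j, a)) | i j a. (i, j) \<in> C \<and> a \<in> Z}) ` E \<union>
     (\<lambda>D. {((i, a), (j, b)) | i j a b. i \<in> T \<and> j \<in> T \<and> (a, b) \<in> D}) ` F"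

definition graph_relations ::
  "'v set \<Rightarrow> ('v \<times> 'v) set set \<Rightarrow> ('v \<Rightarrow> 'v \<Rightarrow> 'a::cstar_algebra) \<Rightarrow> bool" where
  "graph_relations V E W \<longleftrightarrow>
     (\<forall>C\<in>E. \<forall>x\<in>V. \<forall>y\<in>V.
        (\<Sum>z\<in>{z\<in>V. (z, y) \<in> C}. W x z) = (\<Sum>z\<in>{z\<in>V. (x, z) \<in> C}. W z y))"

end

theory Submission
  imports Defs
begin

(* The block identity comes from the relations of the lifted classes of X: for a class C of X they
   give  sum_{k: (k,j) in C} W(i a, k b) = sum_{k: (i,k) in C} W(k a, j b).  Since the classes of X
   partition the off-diagonal pairs of T, summing over C gives the identity with the terms k = j
   resp. k = i left out, and both of these terms are W(i a, j b).  Rows and columns of V then sum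
   to 1 because those of W do.

   V(a, b) is a projection because the entries of one row of a magic biunitary are mutually
   orthogonal, which follows from the C*-axioms alone.  For p = P i the compressions p (P k) p,
   k <> i, sum to zero and satisfy norm (1 - p (P k) p) <= 1, so h = p (P j) p is hermitian with
   norm (m + h) <= m and norm (m - h) <= m for some m > 0.  Then g = h / m vanishes: the
   C*-identity turns norm (1 + g) <= 1 and norm (1 - g) <= 1 into norm (1 + z g) <= 1 for all
   unimodular z, and the identity (1 + x)^2 + (1 + i x)^2 = 2 (1 + (1 + i) x) carries this bound
   over to the circles of radius sqrt 2 ^ n. *)

section \<open>Complex scalars and the involution\<close>

definition of_complex :: "complex \<Rightarrow> 'a::cstar_algebra" where
  "of_complex c = cscale c 1"

lemma cscale_eq_of_complex_mult: "cscale c x = of_complex c * x"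
  unfolding of_complex_def by (metis cscale_mult_left mult_1_left)

lemma of_complex_commute: "x * of_complex c = of_complex c * x"
  unfolding of_complex_def by (metis cscale_mult_left cscale_mult_right mult_1_left mult_1_right)

lemma of_complex_add: "of_complex (a + b) = (of_complex a + of_complex b :: 'a::cstar_algebra)"
  unfolding of_complex_def by (rule cscale_add_left)

lemma of_complex_mult: "of_complex (a * b) = (of_complex a * of_complex b :: 'a::cstar_algebra)"
  unfolding of_complex_def by (metis cscale_mult cscale_mult_left mult_1_left)

lemma of_complex_of_real: "of_complex (complex_of_real r) = (of_real r :: 'a::cstar_algebra)"
  unfolding of_complex_def cscale_of_real by (simp add: of_real_def)

lemma of_complex_one: "of_complex 1 = (1 :: 'a::cstar_algebra)"
  using of_complex_of_real[of 1] by simp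

lemma norm_of_complex_mult: "norm (of_complex c * x :: 'a::cstar_algebra) = cmod c * norm x"
  by (metis cscale_eq_of_complex_mult norm_cscale)

lemma cstar_zero [simp]: "cstar (0::'a::cstar_algebra) = 0"
  by (metis add_cancel_right_right cstar_add)

lemma cstar_one [simp]: "cstar (1::'a::cstar_algebra) = 1"
  by (metis cstar_cstar cstar_mult mult_1_right)

lemma cstar_diff: "cstar (x - y :: 'a::cstar_algebra) = cstar x - cstar y"
  by (metis cstar_add eq_diff_eq)

lemma cstar_sum: "cstar (sum f A) = (\<Sum>x\<in>A. cstar (f x) :: 'a::cstar_algebra)"
  by (induction A rule: infinite_finite_induct) (simp_all add: cstar_add)

lemma cstar_power: "cstar (x ^ n) = cstar x ^ n" for x :: "'a::cstar_algebra"
  by (induction n) (simp_all add: cstar_mult power_commutes)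

lemma cstar_scaleR: "cstar (r *\<^sub>R x) = r *\<^sub>R cstar (x::'a::cstar_algebra)"
  by (metis cscale_of_real cstar_cscale complex_cnj_complex_of_real)

lemma cstar_of_complex: "cstar (of_complex c :: 'a::cstar_algebra) = of_complex (cnj c)"
  unfolding of_complex_def by (simp add: cstar_cscale)

section \<open>Projections summing to one are orthogonal\<close>

lemma norm_mult_self_le_one:
  fixes x :: "'a::real_normed_algebra"
  assumes "norm x \<le> 1"
  shows "norm (x * x) \<le> 1"
  using norm_mult_ineq[of x x] mult_le_one[OF assms norm_ge_zero assms] by linarith

lemma cstar_mult_self_one_add_unimodular_mult:
  fixes g :: "'a::cstar_algebra"
  assumes herm: "cstar g = g" and unimodular: "cmod \<zeta> = 1"
  shows "cstar (1 + of_complex \<zeta> * g) * (1 + of_complex \<zeta> * g)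
    = ((1 + Re \<zeta>) / 2) *\<^sub>R ((1 + g) * (1 + g)) + ((1 - Re \<zeta>) / 2) *\<^sub>R ((1 - g) * (1 - g))"
proof -
  define c where "c = Re \<zeta>"
  let ?z = "1 + of_complex \<zeta> * g"
  have "cstar ?z = 1 + of_complex (cnj \<zeta>) * g"
    by (simp add: cstar_add cstar_mult cstar_of_complex herm of_complex_commute[of g])
  then have "cstar ?z * ?z = 1 + (of_complex \<zeta> + of_complex (cnj \<zeta>)) * g
      + of_complex (cnj \<zeta>) * (g * of_complex \<zeta>) * g"
    by (simp add: ring_distribs mult.assoc)
  also have "\<dots> = 1 + of_complex (\<zeta> + cnj \<zeta>) * g + of_complex (cnj \<zeta> * \<zeta>) * (g * g)"
    unfolding of_complex_commute[of g \<zeta>] by (simp add: of_complex_add of_complex_mult mult.assoc)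
  also have "\<dots> = (1 + g * g) + (2 * c) *\<^sub>R g"
  proof -
    have "\<zeta> + cnj \<zeta> = complex_of_real (2 * c)" by (simp add: c_def complex_add_cnj)
    moreover have "cnj \<zeta> * \<zeta> = 1"
      using unimodular by (simp add: complex_norm_square[symmetric] mult.commute)
    ultimately show ?thesis
      by (simp only: of_complex_of_real of_complex_one scaleR_conv_of_real mult_1_left add_ac)
  qed
  also have "\<dots> = ((1 + c) / 2) *\<^sub>R ((1 + g) * (1 + g)) + ((1 - c) / 2) *\<^sub>R ((1 - g) * (1 - g))"
  proof -
    have squares: "(1 + g) * (1 + g) = (1 + g * g) + 2 *\<^sub>R g" "(1 - g) * (1 - g) = (1 + g * g) - 2 *\<^sub>R g"
      by (simp_all add: algebra_simps scaleR_2)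
    have "a *\<^sub>R (u + 2 *\<^sub>R v) + b *\<^sub>R (u - 2 *\<^sub>R v) = (a + b) *\<^sub>R u + (2 * (a - b)) *\<^sub>R v"
      for a b :: real and u v :: 'a
      by (simp add: algebra_simps)
    moreover have "(1 + c) / 2 + (1 - c) / 2 = 1" "2 * ((1 + c) / 2 - (1 - c) / 2) = 2 * c"
      by (simp_all add: field_simps)
    ultimately show ?thesis unfolding squares by (simp only: scaleR_one)
  qed
  finally show ?thesis unfolding c_def .
qed

lemma norm_one_add_unimodular_mult_le:
  fixes g :: "'a::cstar_algebra"
  assumes herm: "cstar g = g" and plus: "norm (1 + g) \<le> 1" and minus: "norm (1 - g) \<le> 1"
    and unimodular: "cmod \<zeta> = 1"
  shows "norm (1 + of_complex \<zeta> * g) \<le> 1"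
proof -
  define c where "c = Re \<zeta>"
  have c: "\<bar>c\<bar> \<le> 1" using abs_Re_le_cmod[of \<zeta>] unimodular c_def by simp
  let ?z = "1 + of_complex \<zeta> * g"
  have "norm ?z ^ 2 = norm (cstar ?z * ?z)" by (simp add: cstar_identity)
  also have "\<dots> \<le> norm (((1 + c) / 2) *\<^sub>R ((1 + g) * (1 + g))) + norm (((1 - c) / 2) *\<^sub>R ((1 - g) * (1 - g)))"
    unfolding cstar_mult_self_one_add_unimodular_mult[OF herm unimodular] c_def
    by (rule norm_triangle_ineq)
  also have "\<dots> = (1 + c) / 2 * norm ((1 + g) * (1 + g)) + (1 - c) / 2 * norm ((1 - g) * (1 - g))"
    using c by simp
  also have "\<dots> \<le> (1 + c) / 2 + (1 - c) / 2"
    using c norm_mult_self_le_one[OF plus] norm_mult_self_le_one[OF minus]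
    by (intro add_mono mult_left_le) auto
  also have "\<dots> = 1" by (simp add: field_simps)
  finally show ?thesis by (simp add: power_le_one_iff)
qed

lemma norm_one_add_le_one_larger_circle:
  fixes g :: "'a::cstar_algebra"
  assumes circle: "\<And>\<zeta>. cmod \<zeta> = 1 \<Longrightarrow> norm (1 + of_complex (w * \<zeta>) * g) \<le> 1"
    and unimodular: "cmod \<zeta> = 1"
  shows "norm (1 + of_complex ((1 + \<i>) * w * \<zeta>) * g) \<le> 1"
proof -
  define x where "x = of_complex (w * \<zeta>) * g"
  define y where "y = of_complex (w * (\<i> * \<zeta>)) * g"
  have "y = of_complex \<i> * x"
    unfolding x_def y_def by (simp add: of_complex_mult mult_ac)
  then have "y * y = of_complex \<i> * (x * of_complex \<i>) * x"
    by (simp add: mult.assoc)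
  also have "\<dots> = of_complex (\<i> * \<i>) * (x * x)"
    unfolding of_complex_commute[of x] by (simp only: of_complex_mult mult.assoc)
  also have "\<dots> = - (x * x)"
    using of_complex_of_real[of "-1", where 'a='a] by simp
  finally have "y * y = - (x * x)" .
  then have "(1 + x) * (1 + x) + (1 + y) * (1 + y) = 2 *\<^sub>R (1 + (x + y))"
    by (simp add: algebra_simps scaleR_2)
  moreover have "x + y = of_complex ((1 + \<i>) * w * \<zeta>) * g"
  proof -
    have "(1 + \<i>) * w * \<zeta> = w * \<zeta> + w * (\<i> * \<zeta>)" by (simp add: algebra_simps)
    then show ?thesis unfolding x_def y_def by (simp only: of_complex_add distrib_right)
  qed
  moreover have "norm (1 + x) \<le> 1" "norm (1 + y) \<le> 1"
    using circle[OF unimodular] circle[of "\<i> * \<zeta>"] unimodular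
    by (simp_all add: x_def y_def norm_mult)
  ultimately have "norm (2 *\<^sub>R (1 + of_complex ((1 + \<i>) * w * \<zeta>) * g)) \<le> 1 + 1"
    by (metis add_mono norm_mult_self_le_one norm_triangle_le)
  then show ?thesis by simp
qed

lemma hermitian_eq_0_if_norm_one_plus_minus_le:
  fixes g :: "'a::cstar_algebra"
  assumes herm: "cstar g = g" and plus: "norm (1 + g) \<le> 1" and minus: "norm (1 - g) \<le> 1"
  shows "g = 0"
proof -
  have circle: "norm (1 + of_complex ((1 + \<i>) ^ k * \<zeta>) * g) \<le> 1" if "cmod \<zeta> = 1" for k \<zeta>
    using that
  proof (induction k arbitrary: \<zeta>)
    case 0
    then show ?case using norm_one_add_unimodular_mult_le[OF herm plus minus] by simp
  next
    case (Suc k)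
    then show ?case using norm_one_add_le_one_larger_circle[of "(1 + \<i>) ^ k" g \<zeta>] by (simp add: mult.assoc)
  qed
  have bound: "sqrt 2 ^ k * norm g \<le> 2" for k
  proof -
    have "cmod (1 + \<i>) = sqrt 2" by (simp add: cmod_def)
    then have "sqrt 2 ^ k * norm g = norm ((1 + of_complex ((1 + \<i>) ^ k) * g) - 1)"
      by (simp add: norm_of_complex_mult norm_power)
    also have "\<dots> \<le> 2"
      using circle[of 1 k] norm_triangle_ineq4[of "1 + of_complex ((1 + \<i>) ^ k) * g" 1] by simp
    finally show ?thesis .
  qed
  show "g = 0"
  proof (rule ccontr)
    assume "g \<noteq> 0"
    then have "norm g > 0" by simp
    obtain k where "2 / norm g < sqrt 2 ^ k" using real_arch_pow[of "sqrt 2" "2 / norm g"] by auto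
    then show False using bound[of k] \<open>norm g > 0\<close> by (simp add: field_simps)
  qed
qed

lemma le_one_if_power2_le_two:
  fixes a :: real
  assumes "\<And>k. a ^ 2 ^ k \<le> 2"
  shows "a \<le> 1"
proof (rule ccontr)
  assume "\<not> a \<le> 1"
  then obtain k where "2 < a ^ k" using real_arch_pow[of a 2] by auto
  also have "a ^ k \<le> a ^ 2 ^ k"
    using \<open>\<not> a \<le> 1\<close> by (intro power_increasing) (auto intro: less_imp_le[OF less_exp])
  finally show False using assms[of k] by simp
qed

lemma norm_power2_hermitian:
  fixes h :: "'a::cstar_algebra"
  assumes "cstar h = h"
  shows "norm (h ^ 2 ^ k) = norm h ^ 2 ^ k"
proof (induction k)
  case (Suc k)
  have "cstar (h ^ 2 ^ k) = h ^ 2 ^ k"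
    using assms by (simp add: cstar_power)
  then have "norm (h ^ 2 ^ k * h ^ 2 ^ k) = norm (h ^ 2 ^ k) ^ 2"
    by (metis cstar_identity)
  then show ?case by (simp add: Suc power_even_eq power2_eq_square[of "h ^ 2 ^ k"])
qed simp

lemma norm_add_orthogonal_hermitian_le_one:
  fixes u a :: "'a::cstar_algebra"
  assumes herm: "cstar u = u" "cstar a = a" and orth: "u * a = 0"
    and norm: "norm u \<le> 1" "norm a \<le> 1"
  shows "norm (u + a) \<le> 1"
proof (rule le_one_if_power2_le_two)
  fix k
  have orth': "a * u = 0" using herm orth by (metis cstar_mult cstar_zero)
  have power: "(u + a) ^ Suc n = u ^ Suc n + a ^ Suc n" for n
  proof (induction n)
    case (Suc n)
    have "u ^ Suc n * a = 0" "a ^ Suc n * u = 0"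
      by (simp_all only: power_Suc2 mult.assoc orth orth' mult_zero_right)
    then show ?case by (simp only: power_Suc2[of _ "Suc n"] Suc ring_distribs) (simp add: power_Suc2)
  qed simp
  have "cstar (u + a) = u + a" by (simp add: cstar_add herm)
  then have "norm (u + a) ^ 2 ^ k = norm ((u + a) ^ 2 ^ k)"
    by (simp add: norm_power2_hermitian)
  also have "\<dots> = norm (u ^ 2 ^ k + a ^ 2 ^ k)"
    using power[of "2 ^ k - 1"] by simp
  also have "\<dots> \<le> norm u ^ 2 ^ k + norm a ^ 2 ^ k"
    by (intro norm_triangle_le add_mono norm_power_ineq)
  also have "\<dots> \<le> 1 + 1"
    using norm by (intro add_mono power_le_one) auto
  finally show "norm (u + a) ^ 2 ^ k \<le> 2" by simp
qed

lemma norm_projection_le_one: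
  assumes "is_projection (p::'a::cstar_algebra)"
  shows "norm p \<le> 1"
proof -
  have "norm p ^ 2 = norm p"
    using assms cstar_identity[of p] unfolding is_projection_def by simp
  then show ?thesis by (cases "norm p = 0") (auto simp: power2_eq_square)
qed

lemma is_projection_one_minus:
  "is_projection p \<Longrightarrow> is_projection (1 - p :: 'a::cstar_algebra)"
  unfolding is_projection_def by (simp add: cstar_diff algebra_simps)

lemma norm_one_minus_compression_le_one:
  fixes p q :: "'a::cstar_algebra"
  assumes p: "is_projection p" and q: "is_projection q"
  shows "norm (1 - p * q * p) \<le> 1"
proof -
  have pp: "p * p = p" "cstar p = p" using p by (auto simp: is_projection_def)
  have "norm ((1 - p) + p * (1 - q) * p) \<le> 1"
  proof (rule norm_add_orthogonal_hermitian_le_one)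
    show "cstar (1 - p) = 1 - p" "cstar (p * (1 - q) * p) = p * (1 - q) * p"
      using is_projection_one_minus[OF p] is_projection_one_minus[OF q] pp
      by (simp_all add: is_projection_def cstar_mult mult.assoc)
    have "(1 - p) * p = 0" using pp by (simp add: algebra_simps)
    then show "(1 - p) * (p * (1 - q) * p) = 0" by (simp add: mult.assoc[symmetric])
    show "norm (1 - p) \<le> 1"
      by (rule norm_projection_le_one[OF is_projection_one_minus[OF p]])
    have "norm (p * (1 - q) * p) \<le> norm (p * (1 - q)) * norm p"
      by (rule norm_mult_ineq)
    also have "\<dots> \<le> norm p * norm (1 - q) * norm p"
      by (intro mult_right_mono norm_mult_ineq norm_ge_zero)
    also have "\<dots> \<le> 1"
      using norm_projection_le_one[OF p] norm_projection_le_one[OF is_projection_one_minus[OF q]]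
      by (simp add: mult_le_one)
    finally show "norm (p * (1 - q) * p) \<le> 1" .
  qed
  moreover have "(1 - p) + p * (1 - q) * p = 1 - p * q * p"
    using pp by (simp add: algebra_simps)
  ultimately show ?thesis by simp
qed

lemma hermitian_eq_0_if_add_sum_eq_0:
  fixes h :: "'a::cstar_algebra" and H :: "'k \<Rightarrow> 'a"
  assumes "finite K" and herm: "cstar h = h" and "norm (1 - h) \<le> 1"
    and "\<And>k. k \<in> K \<Longrightarrow> norm (1 - H k) \<le> 1" and sum: "h + (\<Sum>k\<in>K. H k) = 0"
  shows "h = 0"
proof (cases "K = {}")
  case True
  then show ?thesis using sum by simp
next
  case False
  define m where "m = real (card K)"
  have "m \<ge> 1" using False \<open>finite K\<close> by (simp add: m_def Suc_le_eq card_gt_0_iff)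
  have "of_real m + h = (\<Sum>k\<in>K. 1 - H k)"
    using sum by (simp add: m_def sum_subtractf eq_neg_iff_add_eq_0[symmetric])
  then have "norm (of_real m + h) \<le> (\<Sum>k\<in>K. norm (1 - H k))"
    by (simp add: norm_sum)
  also have "\<dots> \<le> m"
    using sum_mono[of K "\<lambda>k. norm (1 - H k)" "\<lambda>_. 1"] assms(4) by (simp add: m_def)
  finally have plus: "norm (of_real m + h) \<le> m" .
  have "norm (of_real m - h) = norm (of_real (m - 1) + (1 - h))"
    by (simp add: algebra_simps)
  also have "\<dots> \<le> norm (of_real (m - 1) :: 'a) + norm (1 - h)"
    by (rule norm_triangle_ineq)
  also have "\<dots> \<le> (m - 1) + 1"
    using \<open>m \<ge> 1\<close> assms(3) by (simp del: of_real_diff)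
  finally have minus: "norm (of_real m - h) \<le> m" by simp
  have "(1 / m) *\<^sub>R h = 0"
  proof (rule hermitian_eq_0_if_norm_one_plus_minus_le)
    show "cstar ((1 / m) *\<^sub>R h) = (1 / m) *\<^sub>R h" by (simp add: cstar_scaleR herm)
    have "1 + (1 / m) *\<^sub>R h = (1 / m) *\<^sub>R (of_real m + h)" "1 - (1 / m) *\<^sub>R h = (1 / m) *\<^sub>R (of_real m - h)"
      using \<open>m \<ge> 1\<close> by (simp_all add: scaleR_add_right scaleR_diff_right of_real_def)
    then show "norm (1 + (1 / m) *\<^sub>R h) \<le> 1" "norm (1 - (1 / m) *\<^sub>R h) \<le> 1"
      using plus minus \<open>m \<ge> 1\<close> by (simp_all add: divide_le_eq)
  qed
  then show ?thesis using \<open>m \<ge> 1\<close> by simp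
qed

lemma projections_orthogonal:
  fixes P :: "'k \<Rightarrow> 'a::cstar_algebra"
  assumes "finite K" and proj: "\<And>k. k \<in> K \<Longrightarrow> is_projection (P k)"
    and sum: "(\<Sum>k\<in>K. P k) = 1" and "i \<in> K" "j \<in> K" "i \<noteq> j"
  shows "P i * P j = 0"
proof -
  define p where "p = P i"
  have p: "p * p = p" "cstar p = p" using proj \<open>i \<in> K\<close> by (auto simp: p_def is_projection_def)
  have q: "P j * P j = P j" "cstar (P j) = P j" using proj \<open>j \<in> K\<close> by (auto simp: is_projection_def)
  have "p = p * (\<Sum>k\<in>K. P k) * p" using p sum by simp
  also have "\<dots> = (\<Sum>k\<in>K. p * P k * p)"
    by (simp add: sum_distrib_left sum_distrib_right)
  also have "\<dots> = p * P i * p + (p * P j * p + (\<Sum>k\<in>K - {i, j}. p * P k * p))"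
    using assms(1,4-6)
    by (simp add: sum.remove[of K i] sum.remove[of "K - {i}" j] insert_commute Diff_insert2[symmetric])
  finally have "p * P j * p + (\<Sum>k\<in>K - {i, j}. p * P k * p) = 0"
    using p by (simp add: p_def)
  then have compression: "p * P j * p = 0"
  proof (rule hermitian_eq_0_if_add_sum_eq_0[where K = "K - {i, j}", rotated -1])
    show "cstar (p * P j * p) = p * P j * p" using p q by (simp add: cstar_mult mult.assoc)
    have "norm (1 - p * P k * p) \<le> 1" if "k \<in> K" for k
      using that proj \<open>i \<in> K\<close> by (simp add: p_def norm_one_minus_compression_le_one)
    then show "norm (1 - p * P j * p) \<le> 1" "\<And>k. k \<in> K - {i, j} \<Longrightarrow> norm (1 - p * P k * p) \<le> 1"
      using \<open>j \<in> K\<close> by auto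
  qed (use assms in auto)
  have "cstar (P j * p) * (P j * p) = p * P j * p"
    by (metis cstar_mult mult.assoc p(2) q(1,2))
  then have "norm (P j * p) ^ 2 = norm (p * P j * p)"
    by (metis cstar_identity)
  then have "P j * p = 0" using compression q by simp
  then have "cstar (P j * p) = 0" by simp
  then show ?thesis using p q by (simp add: cstar_mult p_def)
qed

lemma is_projection_sum_orthogonal:
  fixes P :: "'k \<Rightarrow> 'a::cstar_algebra"
  assumes "\<And>k. k \<in> K \<Longrightarrow> is_projection (P k)"
    and "\<And>k l. k \<in> K \<Longrightarrow> l \<in> K \<Longrightarrow> k \<noteq> l \<Longrightarrow> P k * P l = 0"
  shows "is_projection (\<Sum>k\<in>K. P k)"
  unfolding is_projection_def
proof
  show "cstar (\<Sum>k\<in>K. P k) = (\<Sum>k\<in>K. P k)"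
    using assms(1) by (simp add: cstar_sum is_projection_def)
  have "(\<Sum>k\<in>K. P k) * (\<Sum>l\<in>K. P l) = (\<Sum>k\<in>K. \<Sum>l\<in>K. P k * P l)"
    by (simp add: sum_distrib_left sum_distrib_right) (rule sum.swap)
  also have "\<dots> = (\<Sum>k\<in>K. \<Sum>l\<in>K. if l = k then P k else 0)"
    using assms by (intro sum.cong refl) (auto simp: is_projection_def)
  also have "\<dots> = (\<Sum>k\<in>K. P k)"
    by (cases "finite K") simp_all
  finally show "(\<Sum>k\<in>K. P k) * (\<Sum>k\<in>K. P k) = (\<Sum>k\<in>K. P k)" .
qed

section \<open>Free products of colored graphs\<close>

lemma sum_sum_classes:
  assumes "finite E" "pairwise disjnt E" "finite S"
  shows "(\<Sum>C\<in>E. \<Sum>k\<in>{k\<in>S. g k \<in> C}. f k) = (\<Sum>k\<in>{k\<in>S. g k \<in> \<Union>E}. f k)"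
proof -
  have "(\<Union>C\<in>E. {k\<in>S. g k \<in> C}) = {k\<in>S. g k \<in> \<Union>E}" by blast
  moreover have "(\<Sum>C\<in>E. \<Sum>k\<in>{k\<in>S. g k \<in> C}. f k) = (\<Sum>k\<in>(\<Union>C\<in>E. {k\<in>S. g k \<in> C}). f k)"
    using assms unfolding pairwise_def disjnt_def by (intro sum.UNION_disjoint[symmetric]) auto
  ultimately show ?thesis by simp
qed

lemma colored_graph_finite:
  assumes "colored_graph V E"
  shows "finite V" "finite E"
proof -
  show "finite V" using assms by (simp add: colored_graph_def)
  moreover have "E \<subseteq> Pow (V \<times> V)" using assms by (auto simp: colored_graph_def)
  ultimately show "finite E" by (meson finite_Pow_iff finite_SigmaI finite_subset)
qed

lemma colored_graph_sum_classes:
  assumes X: "colored_graph T E" and "j \<in> T"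
  shows "(\<Sum>C\<in>E. \<Sum>k\<in>{k\<in>T. (k, j) \<in> C}. f k) = (\<Sum>k\<in>T - {j}. f k)"
    and "(\<Sum>C\<in>E. \<Sum>k\<in>{k\<in>T. (j, k) \<in> C}. f k) = (\<Sum>k\<in>T - {j}. f k)"
proof -
  have fin: "finite T" "finite E" and disj: "pairwise disjnt E"
    using colored_graph_finite[OF X] X by (auto simp: colored_graph_def)
  have "{k\<in>T. (k, j) \<in> \<Union>E} = T - {j}" "{k\<in>T. (j, k) \<in> \<Union>E} = T - {j}"
    using X \<open>j \<in> T\<close> by (auto simp: colored_graph_def)
  then show "(\<Sum>C\<in>E. \<Sum>k\<in>{k\<in>T. (k, j) \<in> C}. f k) = (\<Sum>k\<in>T - {j}. f k)"
    and "(\<Sum>C\<in>E. \<Sum>k\<in>{k\<in>T. (j, k) \<in> C}. f k) = (\<Sum>k\<in>T - {j}. f k)"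
    using sum_sum_classes[OF fin(2) disj fin(1), where g = "\<lambda>k. (k, j)" and f = f]
      sum_sum_classes[OF fin(2) disj fin(1), where g = "\<lambda>k. (j, k)" and f = f] by simp_all
qed

lemma free_prod_relation_lifted_class:
  assumes rel: "graph_relations (T \<times> Z) (free_prod_classes T E Z F) W"
    and "C \<in> E" "\<alpha> \<in> Z" "\<beta> \<in> Z" "i \<in> T" "j \<in> T"
  shows "(\<Sum>k\<in>{k\<in>T. (k, j) \<in> C}. W (i, \<alpha>) (k, \<beta>))
    = (\<Sum>k\<in>{k\<in>T. (i, k) \<in> C}. W (k, \<alpha>) (j, \<beta>))"
proof -
  define C' where "C' = {((i, a), (j, a)) | i j a. (i, j) \<in> C \<and> a \<in> Z}"
  have "C' \<in> free_prod_classes T E Z F"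
    unfolding free_prod_classes_def C'_def using \<open>C \<in> E\<close> by blast
  then have "(\<Sum>z\<in>{z\<in>T \<times> Z. (z, (j, \<beta>)) \<in> C'}. W (i, \<alpha>) z)
      = (\<Sum>z\<in>{z\<in>T \<times> Z. ((i, \<alpha>), z) \<in> C'}. W z (j, \<beta>))"
    using rel assms(3-6) unfolding graph_relations_def by blast
  moreover have "{z\<in>T \<times> Z. (z, (j, \<beta>)) \<in> C'} = (\<lambda>k. (k, \<beta>)) ` {k\<in>T. (k, j) \<in> C}"
    "{z\<in>T \<times> Z. ((i, \<alpha>), z) \<in> C'} = (\<lambda>k. (k, \<alpha>)) ` {k\<in>T. (i, k) \<in> C}"
    unfolding C'_def using assms(3,4) by auto
  ultimately show ?thesis by (simp add: sum.reindex inj_on_def)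
qed

lemma free_prod_block_row_sum_eq_column_sum:
  assumes X: "colored_graph T E"
    and rel: "graph_relations (T \<times> Z) (free_prod_classes T E Z F) W"
    and "\<alpha> \<in> Z" "\<beta> \<in> Z" "i \<in> T" "j \<in> T"
  shows "(\<Sum>k\<in>T. W (i, \<alpha>) (k, \<beta>)) = (\<Sum>k\<in>T. W (k, \<alpha>) (j, \<beta>))"
proof -
  have "finite T" using colored_graph_finite[OF X] by simp
  have "(\<Sum>k\<in>T - {j}. W (i, \<alpha>) (k, \<beta>))
      = (\<Sum>C\<in>E. \<Sum>k\<in>{k\<in>T. (k, j) \<in> C}. W (i, \<alpha>) (k, \<beta>))"
    by (rule colored_graph_sum_classes(1)[OF X \<open>j \<in> T\<close>, symmetric])
  also have "\<dots> = (\<Sum>C\<in>E. \<Sum>k\<in>{k\<in>T. (i, k) \<in> C}. W (k, \<alpha>) (j, \<beta>))"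
    using free_prod_relation_lifted_class[OF rel _ assms(3-6)] by simp
  also have "\<dots> = (\<Sum>k\<in>T - {i}. W (k, \<alpha>) (j, \<beta>))"
    by (rule colored_graph_sum_classes(2)[OF X \<open>i \<in> T\<close>])
  finally have "(\<Sum>k\<in>T - {j}. W (i, \<alpha>) (k, \<beta>)) = (\<Sum>k\<in>T - {i}. W (k, \<alpha>) (j, \<beta>))" .
  then show ?thesis
    using sum.remove[OF \<open>finite T\<close> \<open>j \<in> T\<close>, of "\<lambda>k. W (i, \<alpha>) (k, \<beta>)"]
      sum.remove[OF \<open>finite T\<close> \<open>i \<in> T\<close>, of "\<lambda>k. W (k, \<alpha>) (j, \<beta>)"] by simp
qed

lemma magic_biunitary_block_sums:
  fixes W :: "('t \<times> 'z) \<Rightarrow> ('t \<times> 'z) \<Rightarrow> 'a::cstar_algebra"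
  assumes magic: "magic_biunitary (T \<times> Z) W" and "finite T" "finite Z" "i \<in> T"
    and block: "\<And>\<alpha> \<beta>. \<alpha> \<in> Z \<Longrightarrow> \<beta> \<in> Z \<Longrightarrow>
      (\<Sum>k\<in>T. W (i, \<alpha>) (k, \<beta>)) = (\<Sum>k\<in>T. W (k, \<alpha>) (i, \<beta>))"
  shows "magic_biunitary Z (\<lambda>\<alpha> \<beta>. \<Sum>k\<in>T. W (i, \<alpha>) (k, \<beta>))"
proof -
  have proj: "\<And>x y. x \<in> T \<times> Z \<Longrightarrow> y \<in> T \<times> Z \<Longrightarrow> is_projection (W x y)"
    and row: "\<And>x. x \<in> T \<times> Z \<Longrightarrow> (\<Sum>y\<in>T \<times> Z. W x y) = 1"
    and column: "\<And>y. y \<in> T \<times> Z \<Longrightarrow> (\<Sum>x\<in>T \<times> Z. W x y) = 1"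
    using magic unfolding magic_biunitary_def by auto
  show ?thesis
    unfolding magic_biunitary_def
  proof (intro conjI ballI)
    fix \<alpha> assume "\<alpha> \<in> Z"
    show "(\<Sum>\<beta>\<in>Z. \<Sum>k\<in>T. W (i, \<alpha>) (k, \<beta>)) = 1"
      using row[of "(i, \<alpha>)"] \<open>\<alpha> \<in> Z\<close> \<open>i \<in> T\<close>
      by (subst sum.swap) (simp add: sum.cartesian_product case_prod_beta')
    fix \<beta> assume "\<beta> \<in> Z"
    show "is_projection (\<Sum>k\<in>T. W (i, \<alpha>) (k, \<beta>))"
    proof (rule is_projection_sum_orthogonal)
      show "is_projection (W (i, \<alpha>) (k, \<beta>))" if "k \<in> T" for k
        using proj that \<open>i \<in> T\<close> \<open>\<alpha> \<in> Z\<close> \<open>\<beta> \<in> Z\<close> by simp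
      show "W (i, \<alpha>) (k, \<beta>) * W (i, \<alpha>) (l, \<beta>) = 0" if "k \<in> T" "l \<in> T" "k \<noteq> l" for k l
        using projections_orthogonal[of "T \<times> Z" "W (i, \<alpha>)" "(k, \<beta>)" "(l, \<beta>)"] that
          proj row \<open>finite T\<close> \<open>finite Z\<close> \<open>i \<in> T\<close> \<open>\<alpha> \<in> Z\<close> \<open>\<beta> \<in> Z\<close> by simp
    qed
  next
    fix \<beta> assume "\<beta> \<in> Z"
    have "(\<Sum>\<alpha>\<in>Z. \<Sum>k\<in>T. W (i, \<alpha>) (k, \<beta>)) = (\<Sum>\<alpha>\<in>Z. \<Sum>k\<in>T. W (k, \<alpha>) (i, \<beta>))"
      using block \<open>\<beta> \<in> Z\<close> by simp
    also have "\<dots> = 1"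
      using column[of "(i, \<beta>)"] \<open>\<beta> \<in> Z\<close> \<open>i \<in> T\<close>
      by (subst sum.swap) (simp add: sum.cartesian_product case_prod_beta')
    finally show "(\<Sum>\<alpha>\<in>Z. \<Sum>k\<in>T. W (i, \<alpha>) (k, \<beta>)) = 1" .
  qed
qed

theorem lemma6p1:
  fixes T :: "'t set" and E :: "('t \<times> 't) set set"
    and Z :: "'z set" and F :: "('z \<times> 'z) set set"
    and W :: "('t \<times> 'z) \<Rightarrow> ('t \<times> 'z) \<Rightarrow> 'a::cstar_algebra"
  assumes X: "colored_graph T E"
    and Y: "colored_graph Z F"
    and magic: "magic_biunitary (T \<times> Z) W"
    and rel: "graph_relations (T \<times> Z) (free_prod_classes T E Z F) W"
  shows "(\<forall>\<alpha>\<in>Z. \<forall>\<beta>\<in>Z. \<forall>i\<in>T. \<forall>j\<in>T.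
            (\<Sum>k\<in>T. W (i, \<alpha>) (k, \<beta>)) = (\<Sum>k\<in>T. W (k, \<alpha>) (j, \<beta>)))
       \<and> (\<forall>i\<in>T. magic_biunitary Z (\<lambda>\<alpha> \<beta>. \<Sum>k\<in>T. W (i, \<alpha>) (k, \<beta>)))"
proof (intro conjI ballI)
  fix \<alpha> \<beta> i j assume "\<alpha> \<in> Z" "\<beta> \<in> Z" "i \<in> T" "j \<in> T"
  then show "(\<Sum>k\<in>T. W (i, \<alpha>) (k, \<beta>)) = (\<Sum>k\<in>T. W (k, \<alpha>) (j, \<beta>))"
    by (rule free_prod_block_row_sum_eq_column_sum[OF X rel])
next
  fix i assume "i \<in> T"
  show "magic_biunitary Z (\<lambda>\<alpha> \<beta>. \<Sum>k\<in>T. W (i, \<alpha>) (k, \<beta>))"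
    using magic_biunitary_block_sums[OF magic colored_graph_finite(1)[OF X] colored_graph_finite(1)[OF Y] \<open>i \<in> T\<close>]
      free_prod_block_row_sum_eq_column_sum[OF X rel _ _ \<open>i \<in> T\<close> \<open>i \<in> T\<close>] by blast
qed

end
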